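(* The expected total number of queries to $\mathcal{O}_1$ and $\mathcal{O}_2$ performed by the modified multi-phase process described in the context is $O(n)$.
   Context: Let $n\ge2$ be an integer such that $m=n/\log_2 n$ is an integer, and let $S'$ be a set of $m$ distinct elements of a totally ordered set. For $\rho\in(0,1]$, $S^-_\rho$ denotes the set of the $\lceil \rho m\rceil$ smallest elements of $S'$ and $S^+_\rho=S'\setminus S^-_\rho$. There are two oracles $\mathcal{O}_1,\mathcal{O}_2$ which can be queried with an element $x\in S'$ and answer "relevant" or "not relevant" in constant time, all answers being mutually independent; for constants $p_1,p_2\in[0,\tfrac12)$: $\mathcal{O}_1$ reports $x$ relevant with probability at least $1-p_1$ if $x\in S^-_{1/6}$ and at most $p_1$ if $x\in S^+_{1/3}$; $\mathcal{O}_2$ reports $x$ relevant with probability at least $1-p_2$ if $x\in S^-_{1/3}$ and at most $p_2$ if $x\in S^+_{3/4}$. For $q\in[0,\tfrac12)$ let $c_q=\lceil 4(1-q)/(1-2q)^2\rceil$. Let $\eta = 1+\lceil \log_2 \frac{n}{\log_2 n}\rceil$. Modified multi-phase process: the elements of $S'$ are considered one at a time. For the current element $x$, a preliminary test is performed consisting of $8c_{p_1}\lceil \ln n\rceil+1$ queries to $\mathcal{O}_1$ on $x$; it is passed if the majority report $x$ relevant, otherwise $x$ is discarded and the next element is considered. Then, for $i=1,\dots,\eta$, the $i$-th test consists of $2\lceil 2^i\ln n\rceil c_{p_2}+1$ queries to $\mathcal{O}_2$ on $x$ and is passed if the majority report $x$ relevant; if $x$ fails a test it is discarded and the next element is considered.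 The process stops and returns the first element that passes the $\eta$-th test. Here $\ln$ is the natural logarithm; the $O(\cdot)$ constant depends only on $p_1,p_2$. *)

theory Defs
  imports "HOL-Probability.Probability"
begin

definition cq :: "real \<Rightarrow> nat" where
  "cq q = nat \<lceil>4 * (1 - q) / (1 - 2 * q)^2\<rceil>"

definition eta :: "nat \<Rightarrow> nat" where
  "eta n = 1 + nat \<lceil>log 2 (real n / log 2 (real n))\<rceil>"

definition prelim_size :: "real \<Rightarrow> nat \<Rightarrow> nat" where
  "prelim_size p1 n = 8 * cq p1 * nat \<lceil>ln (real n)\<rceil> + 1"

definition test_size :: "real \<Rightarrow> nat \<Rightarrow> nat \<Rightarrow> nat" where
  "test_size p2 n i = 2 * nat \<lceil>2 ^ i * ln (real n)\<rceil> * cq p2 + 1"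

text \<open>Outcome of a test consisting of N independent queries, each answering
  "relevant" with probability q: passed iff the majority answers "relevant".\<close>
definition majority_test :: "nat \<Rightarrow> real \<Rightarrow> bool pmf" where
  "majority_test N q = map_pmf (\<lambda>k. N < 2 * k) (binomial_pmf N q)"

text \<open>Run a sequence of tests (size, success probability of a single query)
  on one element; result: (number of queries spent, whether all tests passed).
  Stops at the first failed test.\<close>
fun run_tests :: "(nat \<times> real) list \<Rightarrow> (nat \<times> bool) pmf" where
  "run_tests [] = return_pmf (0, True)"
| "run_tests ((N, q) # ts) =
     majority_test N q \<bind> (\<lambda>b.
       if b then map_pmf (\<lambda>(c, r). (c + N, r)) (run_tests ts)
       else return_pmf (N, False))"

text \<open>The tests applied to element x: the preliminary test (oracle O1, relevance
  probability q1 x) followed by tests i = 1..eta (oracle O2, probability q2 x).\<close>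
definition elem_tests ::
  "real \<Rightarrow> real \<Rightarrow> nat \<Rightarrow> ('a \<Rightarrow> real) \<Rightarrow> ('a \<Rightarrow> real) \<Rightarrow> 'a \<Rightarrow> (nat \<times> real) list" where
  "elem_tests p1 p2 n q1 q2 x =
     (prelim_size p1 n, q1 x) # map (\<lambda>i. (test_size p2 n i, q2 x)) [1..<eta n + 1]"

text \<open>Distribution of the total number of queries of the modified multi-phase
  process, considering the elements in the order of the list; it stops as soon
  as an element passes all tests (or when the elements are exhausted).\<close>
fun process_cost ::
  "real \<Rightarrow> real \<Rightarrow> nat \<Rightarrow> ('a \<Rightarrow> real) \<Rightarrow> ('a \<Rightarrow> real) \<Rightarrow> 'a list \<Rightarrow> nat pmf" where
  "process_cost p1 p2 n q1 q2 [] = return_pmf 0"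
| "process_cost p1 p2 n q1 q2 (x # xs) =
     run_tests (elem_tests p1 p2 n q1 q2 x) \<bind> (\<lambda>(c, ok).
       if ok then return_pmf c else map_pmf (\<lambda>d. c + d) (process_cost p1 p2 n q1 q2 xs))"

text \<open>S^-_rho: the ceil(rho |S|) smallest elements of S; S^+_rho its complement in S.\<close>
definition lower_part :: "real \<Rightarrow> 'a::linorder set \<Rightarrow> 'a set" where
  "lower_part \<rho> S = {x \<in> S. card {y \<in> S. y < x} < nat \<lceil>\<rho> * real (card S)\<rceil>}"

definition upper_part :: "real \<Rightarrow> 'a::linorder set \<Rightarrow> 'a set" where
  "upper_part \<rho> S = S - lower_part \<rho> S"

end

theory Submission
  imports Defs
begin

text \<open>Every element x either lies in S^+_{1/3}, where by Hoeffding's inequality it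
  passes the preliminary test with probability at most 1/n, or in S^-_{1/3}, where the
  i-th later test fails with probability at most 2^-(i+1), so that once x has passed the
  preliminary test it is returned with probability at least 1/2. Let T = O(n) be the total
  size of the later tests and P the size of the preliminary test. In both cases the
  expected cost of examining x is at most P + T/n + 2T \<pi>(x), where \<pi>(x) is the probability
  that x is returned. The term 2T \<pi>(x) is paid at most once in expectation, since the
  process stops at the first returned element; hence the expected total cost is at most
  |S'| (P + T/n) + 2T = O(n).\<close>

lemma expectation_bind_pmf_finite:
  fixes f :: "'b \<Rightarrow> real"
  assumes fin: "finite (set_pmf M)" and finN: "\<And>x. x \<in> set_pmf M \<Longrightarrow> finite (set_pmf (N x))"
    and nonneg: "\<And>y. 0 \<le> f y"
  shows "measure_pmf.expectation (bind_pmf M N) f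
       = measure_pmf.expectation M (\<lambda>x. measure_pmf.expectation (N x) f)"
proof -
  have "ennreal (measure_pmf.expectation (bind_pmf M N) f) = (\<integral>\<^sup>+y. f y \<partial>bind_pmf M N)"
    using fin finN nonneg
    by (intro nn_integral_eq_integral[symmetric] integrable_measure_pmf_finite)
       (auto simp: set_bind_pmf)
  also have "\<dots> = (\<integral>\<^sup>+x. \<integral>\<^sup>+y. f y \<partial>N x \<partial>M)"
    by simp
  also have "\<dots> = (\<integral>\<^sup>+x. measure_pmf.expectation (N x) f \<partial>M)"
    using finN nonneg
    by (intro nn_integral_cong_AE)
       (auto simp: AE_measure_pmf_iff intro!: nn_integral_eq_integral integrable_measure_pmf_finite)
  also have "\<dots> = measure_pmf.expectation M (\<lambda>x. measure_pmf.expectation (N x) f)"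
    using fin nonneg
    by (intro nn_integral_eq_integral integrable_measure_pmf_finite)
       (auto intro!: integral_nonneg_AE)
  finally show ?thesis
    using nonneg by (simp add: integral_nonneg_AE)
qed

lemma expectation_bool_pmf:
  fixes g :: "bool \<Rightarrow> real"
  shows "measure_pmf.expectation M g = pmf M True * g True + (1 - pmf M True) * g False"
  by (subst integral_measure_pmf_real[where A = UNIV]) (auto simp: UNIV_bool pmf_False_conv_True)

lemma finite_set_pmf_majority_test: "finite (set_pmf (majority_test N q))"
  by (rule finite_subset[of _ UNIV]) auto

lemma finite_set_pmf_run_tests: "finite (set_pmf (run_tests ts))"
  by (induction ts rule: run_tests.induct)
     (auto simp: set_bind_pmf finite_set_pmf_majority_test)

lemma finite_set_pmf_process_cost: "finite (set_pmf (process_cost p1 p2 n q1 q2 xs))"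
  by (induction xs) (auto simp: set_bind_pmf finite_set_pmf_run_tests split: if_splits)

definition expected_tests_cost :: "(nat \<times> real) list \<Rightarrow> real" where
  "expected_tests_cost ts = measure_pmf.expectation (run_tests ts) (\<lambda>r. real (fst r))"

definition tests_pass_prob :: "(nat \<times> real) list \<Rightarrow> real" where
  "tests_pass_prob ts = measure_pmf.expectation (run_tests ts) (\<lambda>r. if snd r then 1 else 0)"

lemma expected_tests_cost_Nil [simp]: "expected_tests_cost [] = 0"
  by (simp add: expected_tests_cost_def)

lemma tests_pass_prob_Nil [simp]: "tests_pass_prob [] = 1"
  by (simp add: tests_pass_prob_def)

lemma expectation_run_tests_Cons:
  fixes f :: "nat \<times> bool \<Rightarrow> real"
  assumes "\<And>r. 0 \<le> f r"
  shows "measure_pmf.expectation (run_tests ((N, q) # ts)) f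
       = pmf (majority_test N q) True
           * measure_pmf.expectation (run_tests ts) (\<lambda>(c, r). f (c + N, r))
         + (1 - pmf (majority_test N q) True) * f (N, False)"
  using assms
  by (simp add: expectation_bind_pmf_finite finite_set_pmf_majority_test finite_set_pmf_run_tests
      expectation_bool_pmf case_prod_unfold)

lemma expected_tests_cost_Cons [simp]:
  "expected_tests_cost ((N, q) # ts) = N + pmf (majority_test N q) True * expected_tests_cost ts"
proof -
  have "measure_pmf.expectation (run_tests ts) (\<lambda>r. real (fst r) + real N)
      = expected_tests_cost ts + N"
    unfolding expected_tests_cost_def
    by (simp add: finite_set_pmf_run_tests integrable_measure_pmf_finite)
  then show ?thesis
    unfolding expected_tests_cost_def
    by (subst expectation_run_tests_Cons) (simp_all add: case_prod_unfold algebra_simps)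
qed

lemma tests_pass_prob_Cons [simp]:
  "tests_pass_prob ((N, q) # ts) = pmf (majority_test N q) True * tests_pass_prob ts"
  unfolding tests_pass_prob_def
  by (subst expectation_run_tests_Cons) (simp_all add: case_prod_unfold)

lemma expected_tests_cost_nonneg: "0 \<le> expected_tests_cost ts"
  unfolding expected_tests_cost_def by (auto intro: integral_nonneg_AE)

lemma tests_pass_prob_nonneg: "0 \<le> tests_pass_prob ts"
  unfolding tests_pass_prob_def by (auto intro: integral_nonneg_AE)

lemma tests_pass_prob_le_1: "tests_pass_prob ts \<le> 1"
proof (induction ts)
  case (Cons t ts)
  then show ?case
    by (cases t) (auto simp: pmf_le_1 intro!: mult_le_one tests_pass_prob_nonneg)
qed simp

lemma expected_tests_cost_le_sum_sizes: "expected_tests_cost ts \<le> (\<Sum>(N, q)\<leftarrow>ts. real N)"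
proof (induction ts)
  case (Cons t ts)
  obtain N q where t: "t = (N, q)"
    by fastforce
  have "pmf (majority_test N q) True * expected_tests_cost ts \<le> expected_tests_cost ts"
    by (intro mult_left_le_one_le pmf_le_1 expected_tests_cost_nonneg) simp
  with Cons.IH show ?case
    by (simp add: t)
qed simp

lemma tests_pass_prob_ge_union_bound:
  "1 - (\<Sum>(N, q)\<leftarrow>ts. pmf (majority_test N q) False) \<le> tests_pass_prob ts"
proof (induction ts)
  case (Cons t ts)
  obtain N q where t: "t = (N, q)"
    by fastforce
  define a where "a = pmf (majority_test N q) True"
  define S where "S = (\<Sum>(N, q)\<leftarrow>ts. pmf (majority_test N q) False)"
  have "0 \<le> a" "a \<le> 1" "0 \<le> S"
    by (auto simp: a_def S_def pmf_le_1 intro!: sum_list_nonneg)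
  then have "a - S \<le> a * (1 - S)"
    by (simp add: right_diff_distrib mult_left_le_one_le)
  also have "\<dots> \<le> a * tests_pass_prob ts"
    using Cons.IH \<open>0 \<le> a\<close> by (simp add: S_def mult_left_mono)
  finally show ?case
    by (simp add: t a_def S_def pmf_False_conv_True)
qed simp

lemma expected_process_cost_Cons:
  "measure_pmf.expectation (process_cost p1 p2 n q1 q2 (x # xs)) real
     = expected_tests_cost (elem_tests p1 p2 n q1 q2 x)
       + (1 - tests_pass_prob (elem_tests p1 p2 n q1 q2 x))
         * measure_pmf.expectation (process_cost p1 p2 n q1 q2 xs) real"
proof -
  let ?R = "run_tests (elem_tests p1 p2 n q1 q2 x)"
  let ?E = "measure_pmf.expectation (process_cost p1 p2 n q1 q2 xs) real"
  have fin: "finite (set_pmf ?R)" "finite (set_pmf (process_cost p1 p2 n q1 q2 xs))"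
    by (simp_all add: finite_set_pmf_run_tests finite_set_pmf_process_cost)
  have "measure_pmf.expectation (process_cost p1 p2 n q1 q2 (x # xs)) real
      = measure_pmf.expectation ?R
          (\<lambda>r. measure_pmf.expectation
             ((\<lambda>(c, ok). if ok then return_pmf c
                           else map_pmf ((+) c) (process_cost p1 p2 n q1 q2 xs)) r) real)"
    unfolding process_cost.simps
    using fin by (intro expectation_bind_pmf_finite) (auto split: if_splits)
  also have "\<dots> = measure_pmf.expectation ?R
                    (\<lambda>r. real (fst r) + (1 - (if snd r then 1 else 0)) * ?E)"
    using fin by (intro Bochner_Integration.integral_cong)
                 (auto simp: integrable_measure_pmf_finite)
  also have "\<dots> = expected_tests_cost (elem_tests p1 p2 n q1 q2 x)
                  + (1 - tests_pass_prob (elem_tests p1 p2 n q1 q2 x)) * ?E"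
    using fin unfolding expected_tests_cost_def tests_pass_prob_def
    by (simp add: integrable_measure_pmf_finite algebra_simps)
  finally show ?thesis .
qed

lemma expected_process_cost_le:
  fixes D B :: real
  assumes "0 \<le> D" "0 \<le> B"
    and "\<forall>x\<in>set xs. expected_tests_cost (elem_tests p1 p2 n q1 q2 x)
                   \<le> D + B * tests_pass_prob (elem_tests p1 p2 n q1 q2 x)"
  shows "measure_pmf.expectation (process_cost p1 p2 n q1 q2 xs) real \<le> length xs * D + B"
  using assms(3)
proof (induction xs)
  case (Cons x xs)
  let ?E = "measure_pmf.expectation (process_cost p1 p2 n q1 q2 xs) real"
  define \<pi> where "\<pi> = tests_pass_prob (elem_tests p1 p2 n q1 q2 x)"
  have "0 \<le> \<pi>" "\<pi> \<le> 1"
    by (simp_all add: \<pi>_def tests_pass_prob_nonneg tests_pass_prob_le_1)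
  moreover have "?E \<le> length xs * D + B"
    using Cons by simp
  ultimately have "(1 - \<pi>) * ?E \<le> (1 - \<pi>) * (length xs * D + B)"
    by (intro mult_left_mono) simp_all
  also have "\<dots> \<le> length xs * D + B - \<pi> * B"
    using \<open>0 \<le> \<pi>\<close> \<open>0 \<le> D\<close> by (simp add: algebra_simps)
  finally show ?case
    using Cons.prems unfolding expected_process_cost_Cons \<pi>_def by (simp add: algebra_simps)
qed (simp add: assms(2))

lemma exp_hoeffding_le_inverse:
  fixes p \<epsilon> K :: real
  assumes "1/2 - p \<le> \<epsilon>" "p < 1/2" "0 < K" "2 * ln K \<le> real N * (1 - 2 * p)^2"
  shows "exp (-2 * real N * \<epsilon>^2) \<le> 1 / K"
proof -
  have "(1 - 2 * p)^2 \<le> 4 * \<epsilon>^2"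
    using assms(1,2) power_mono[of "1 - 2 * p" "2 * \<epsilon>" 2] by (simp add: power_mult_distrib)
  then have "real N * (1 - 2 * p)^2 \<le> real N * (4 * \<epsilon>^2)"
    by (intro mult_left_mono) simp_all
  with assms(4) have "ln K \<le> 2 * real N * \<epsilon>^2"
    by simp
  then have "exp (-2 * real N * \<epsilon>^2) \<le> exp (- ln K)"
    by simp
  also have "\<dots> = 1 / K"
    using assms(3) by (simp add: exp_minus inverse_eq_divide)
  finally show ?thesis .
qed

lemma majority_test_True_le:
  fixes p q K :: real
  assumes "0 \<le> q" "q \<le> p" "p < 1/2" "0 < N"
    and "0 < K" "2 * ln K \<le> real N * (1 - 2 * p)^2"
  shows "pmf (majority_test N q) True \<le> 1 / K"
proof -
  interpret binomial_distribution N q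
    using assms by unfold_locales simp_all
  have "pmf (majority_test N q) True = measure_pmf.prob (binomial_pmf N q) {k. N < 2 * k}"
    unfolding majority_test_def pmf_map by (simp add: vimage_def)
  also have "\<dots> \<le> measure_pmf.prob (binomial_pmf N q) {k. real k / N \<ge> q + (1/2 - q)}"
    using assms by (intro measure_pmf.finite_measure_mono) (auto simp: field_simps)
  also have "\<dots> \<le> exp (-2 * real N * (1/2 - q)^2)"
    using prob_ge'[of "1/2 - q"] assms by simp
  also have "\<dots> \<le> 1 / K"
    using assms by (intro exp_hoeffding_le_inverse) simp_all
  finally show ?thesis .
qed

lemma majority_test_False_le:
  fixes p q K :: real
  assumes "1 - p \<le> q" "q \<le> 1" "p < 1/2" "0 < N"
    and "0 < K" "2 * ln K \<le> real N * (1 - 2 * p)^2"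
  shows "pmf (majority_test N q) False \<le> 1 / K"
proof -
  interpret binomial_distribution N q
    using assms by unfold_locales simp_all
  have "pmf (majority_test N q) False = measure_pmf.prob (binomial_pmf N q) {k. \<not> N < 2 * k}"
    unfolding majority_test_def pmf_map by (simp add: vimage_def)
  also have "\<dots> \<le> measure_pmf.prob (binomial_pmf N q) {k. real k / N \<le> q - (q - 1/2)}"
    using assms by (intro measure_pmf.finite_measure_mono) (auto simp: field_simps)
  also have "\<dots> \<le> exp (-2 * real N * (q - 1/2)^2)"
    using prob_le'[of "q - 1/2"] assms by simp
  also have "\<dots> \<le> 1 / K"
    using assms by (intro exp_hoeffding_le_inverse) simp_all
  finally show ?thesis .
qed

lemma two_le_cq_mult:
  assumes "p < 1/2"
  shows "2 \<le> real (cq p) * (1 - 2 * p)^2"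
proof -
  have pos: "0 < (1 - 2 * p)^2"
    using assms by simp
  have "4 * (1 - p) / (1 - 2 * p)^2 \<le> real (cq p)"
    unfolding cq_def by linarith
  then have "4 * (1 - p) \<le> real (cq p) * (1 - 2 * p)^2"
    using pos by (simp add: divide_le_eq)
  with assms show ?thesis
    by simp
qed

lemma prelim_test_pass_le:
  assumes "2 \<le> n" "0 \<le> q" "q \<le> p" "p < 1/2"
  shows "pmf (majority_test (prelim_size p n) q) True \<le> 1 / real n"
proof (rule majority_test_True_le)
  let ?c = "real (cq p)" and ?l = "ln (real n)"
  have "0 \<le> ?l"
    using assms(1) by simp
  have "?l \<le> real (nat \<lceil>?l\<rceil>)"
    by linarith
  then have "8 * ?c * ?l \<le> 8 * ?c * real (nat \<lceil>?l\<rceil>)"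
    by (intro mult_left_mono) simp_all
  then have size_ge: "8 * ?c * ?l \<le> real (prelim_size p n)"
    unfolding prelim_size_def by simp
  have "8 * ?l * (?c * (1 - 2 * p)^2) \<le> real (prelim_size p n) * (1 - 2 * p)^2"
    using mult_right_mono[OF size_ge zero_le_power2[of "1 - 2 * p"]] by (simp add: algebra_simps)
  moreover have "8 * ?l * 2 \<le> 8 * ?l * (?c * (1 - 2 * p)^2)"
    using two_le_cq_mult[OF assms(4)] \<open>0 \<le> ?l\<close> by (intro mult_left_mono) simp_all
  ultimately show "2 * ?l \<le> real (prelim_size p n) * (1 - 2 * p)^2"
    using \<open>0 \<le> ?l\<close> by linarith
qed (use assms in \<open>simp_all add: prelim_size_def\<close>)

lemma later_test_fail_le:
  assumes "2 \<le> n" "1 - p \<le> q" "q \<le> 1" "p < 1/2"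
  shows "pmf (majority_test (test_size p n i) q) False \<le> (1/2) ^ (i + 1)"
proof -
  let ?c = "real (cq p)" and ?l = "ln (real n)"
  have "ln 2 \<le> ?l" "0 \<le> ?l"
    using assms(1) by simp_all
  have "2^i * ?l \<le> real (nat \<lceil>2^i * ?l\<rceil>)"
    by linarith
  then have "2 * (2^i * ?l) * ?c \<le> 2 * real (nat \<lceil>2^i * ?l\<rceil>) * ?c"
    by (intro mult_right_mono) simp_all
  then have size_ge: "2 * 2^i * ?l * ?c \<le> real (test_size p n i)"
    unfolding test_size_def by simp
  have "2 * 2^i * ?l * (?c * (1 - 2 * p)^2) \<le> real (test_size p n i) * (1 - 2 * p)^2"
    using mult_right_mono[OF size_ge zero_le_power2[of "1 - 2 * p"]] by (simp add: algebra_simps)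
  moreover have "2 * 2^i * ln 2 * 2 \<le> 2 * 2^i * ?l * (?c * (1 - 2 * p)^2)"
  proof (rule mult_mono)
    show "2 * 2^i * ln 2 \<le> 2 * 2^i * ?l"
      using \<open>ln 2 \<le> ?l\<close> by simp
    show "0 \<le> 2 * 2^i * ?l"
      using \<open>0 \<le> ?l\<close> by simp
  qed (use two_le_cq_mult[OF assms(4)] in simp_all)
  moreover have "2 * real (i + 1) * ln 2 \<le> 2 * 2^i * ln 2 * 2"
  proof -
    have "real (i + 1) < real (2 ^ (i + 1))"
      by (simp only: of_nat_less_iff less_exp)
    then have "real (i + 1) \<le> 2 * 2^i"
      by simp
    then show ?thesis
      by (simp add: mult_right_mono)
  qed
  moreover have "ln (2 ^ (i + 1)) = real (i + 1) * ln (2::real)"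
    by (rule ln_realpow)
  ultimately have "2 * ln (2 ^ (i + 1)) \<le> real (test_size p n i) * (1 - 2 * p)^2"
    by linarith
  then have "pmf (majority_test (test_size p n i) q) False \<le> 1 / 2 ^ (i + 1)"
    using assms by (intro majority_test_False_le) (simp_all add: test_size_def)
  then show ?thesis
    by (simp add: power_one_over)
qed

lemma later_tests_pass_prob_ge:
  assumes "2 \<le> n" "1 - p \<le> q" "q \<le> 1" "p < 1/2"
  shows "1/2 \<le> tests_pass_prob (map (\<lambda>i. (test_size p n i, q)) [1..<k + 1])"
proof -
  have "(\<Sum>(N, q)\<leftarrow>map (\<lambda>i. (test_size p n i, q)) [1..<k + 1]. pmf (majority_test N q) False)
      = (\<Sum>i=1..<k + 1. pmf (majority_test (test_size p n i) q) False)"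
    by (simp add: interv_sum_list_conv_sum_set_nat o_def)
  also have "\<dots> \<le> (\<Sum>i=1..<k + 1. (1/2) ^ (i + 1))"
    using assms by (intro sum_mono later_test_fail_le)
  also have "\<dots> = 1/2 - (1/2) ^ (k + 1)"
    by (induction k) simp_all
  finally show ?thesis
    using tests_pass_prob_ge_union_bound[of "map (\<lambda>i. (test_size p n i, q)) [1..<k + 1]"]
      zero_le_power[of "1/2::real" "k + 1"]
    by linarith
qed

definition later_tests :: "real \<Rightarrow> nat \<Rightarrow> real \<Rightarrow> (nat \<times> real) list" where
  "later_tests p n q = map (\<lambda>i. (test_size p n i, q)) [1..<eta n + 1]"

definition later_tests_size :: "real \<Rightarrow> nat \<Rightarrow> real" where
  "later_tests_size p n = (\<Sum>i=1..<eta n + 1. real (test_size p n i))"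

lemma elem_tests_eq: "elem_tests p1 p2 n q1 q2 x = (prelim_size p1 n, q1 x) # later_tests p2 n (q2 x)"
  by (simp add: elem_tests_def later_tests_def)

lemma expected_tests_cost_later_tests_le: "expected_tests_cost (later_tests p n q) \<le> later_tests_size p n"
  using expected_tests_cost_le_sum_sizes[of "later_tests p n q"]
  by (simp del: upt_Suc add: later_tests_def later_tests_size_def interv_sum_list_conv_sum_set_nat o_def)

lemma later_tests_size_nonneg: "0 \<le> later_tests_size p n"
  by (simp add: later_tests_size_def sum_nonneg)

lemma
  assumes "2 \<le> n"
  shows one_le_div_log2: "1 \<le> real n / log 2 n"
    and div_log2_le: "real n / log 2 n \<le> n"
    and div_log2_mult_ln_le: "real n / log 2 n * ln n \<le> n"
proof -
  have "1 \<le> log 2 n"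
    using assms by simp
  moreover have "log 2 n < n"
    using assms by (intro log2_of_power_less less_exp) simp
  ultimately show "1 \<le> real n / log 2 n" "real n / log 2 n \<le> n"
    by (simp_all add: le_divide_eq divide_le_eq)
  have "real n / log 2 n * ln n = n * ln 2"
    using assms by (simp add: log_def)
  also have "\<dots> \<le> n"
    using ln_2_less_1 by (simp add: mult_left_le)
  finally show "real n / log 2 n * ln n \<le> n" .
qed

lemma two_pow_eta_le:
  assumes "2 \<le> n"
  shows "2 ^ eta n \<le> 4 * (real n / log 2 n)"
proof -
  define m where "m = real n / log 2 n"
  have "1 \<le> m"
    using one_le_div_log2[OF assms] by (simp add: m_def)
  define k where "k = nat \<lceil>log 2 m\<rceil>"
  have "0 \<le> log 2 m"
    using \<open>1 \<le> m\<close> by simp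
  then have "real k \<le> log 2 m + 1"
    unfolding k_def by linarith
  then have "(2::real) ^ k \<le> 2 powr (log 2 m + 1)"
    by (simp add: powr_realpow[symmetric])
  also have "\<dots> = 2 * m"
    using \<open>1 \<le> m\<close> by (simp add: powr_add)
  finally show ?thesis
    by (simp add: eta_def k_def m_def)
qed

lemma later_tests_size_le:
  assumes "2 \<le> n"
  shows "later_tests_size p n \<le> (32 * real (cq p) + 8) * n"
proof -
  let ?c = "real (cq p)" and ?l = "ln (real n)" and ?m = "real n / log 2 n"
  have "0 \<le> ?l"
    using assms by simp
  have size_le: "real (test_size p n i) \<le> (2 * ?c * ?l + 2 * ?c + 1) * 2 ^ i" for i
  proof -
    have "0 \<le> 2 ^ i * ?l"
      using \<open>0 \<le> ?l\<close> by simp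
    then have "real (nat \<lceil>2 ^ i * ?l\<rceil>) \<le> 2 ^ i * ?l + 1"
      by linarith
    then have "real (test_size p n i) \<le> 2 * (2 ^ i * ?l + 1) * ?c + 1"
      unfolding test_size_def by (simp add: mult_right_mono)
    also have "\<dots> \<le> (2 * ?c * ?l + 2 * ?c + 1) * 2 ^ i"
      using mult_right_mono[of 1 "2 ^ i" "2 * ?c + 1"] by (simp add: algebra_simps)
    finally show ?thesis .
  qed
  have "(\<Sum>i=1..<k + 1. (2::real) ^ i) \<le> 2 ^ (k + 1)" for k
    by (induction k) simp_all
  from this[of "eta n"] have geometric_sum_le: "(\<Sum>i=1..<eta n + 1. (2::real) ^ i) \<le> 8 * ?m"
    using two_pow_eta_le[OF assms] by simp
  have "later_tests_size p n \<le> (\<Sum>i=1..<eta n + 1. (2 * ?c * ?l + 2 * ?c + 1) * 2 ^ i)"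
    unfolding later_tests_size_def by (intro sum_mono size_le)
  also have "\<dots> = (2 * ?c * ?l + 2 * ?c + 1) * (\<Sum>i=1..<eta n + 1. 2 ^ i)"
    by (rule sum_distrib_left[symmetric])
  also have "\<dots> \<le> (2 * ?c * ?l + 2 * ?c + 1) * (8 * ?m)"
    using geometric_sum_le \<open>0 \<le> ?l\<close> by (intro mult_left_mono) simp_all
  also have "\<dots> = 16 * ?c * (?m * ?l) + (16 * ?c + 8) * ?m"
    by (simp add: algebra_simps)
  also have "\<dots> \<le> 16 * ?c * n + (16 * ?c + 8) * n"
    using div_log2_mult_ln_le[OF assms] div_log2_le[OF assms]
    by (intro add_mono mult_left_mono) simp_all
  finally show ?thesis
    by (simp add: algebra_simps)
qed

lemma div_log2_mult_prelim_size_le: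
  assumes "2 \<le> n"
  shows "real n / log 2 n * prelim_size p n \<le> (16 * real (cq p) + 1) * n"
proof -
  let ?c = "real (cq p)" and ?l = "ln (real n)" and ?m = "real n / log 2 n"
  have "0 \<le> ?l"
    using assms by simp
  then have "real (nat \<lceil>?l\<rceil>) \<le> ?l + 1"
    by linarith
  then have "real (prelim_size p n) \<le> 8 * ?c * (?l + 1) + 1"
    unfolding prelim_size_def by (simp add: mult_left_mono)
  then have "?m * prelim_size p n \<le> ?m * (8 * ?c * (?l + 1) + 1)"
    using one_le_div_log2[OF assms] by (intro mult_left_mono) simp_all
  also have "\<dots> = 8 * ?c * (?m * ?l) + (8 * ?c + 1) * ?m"
    by (simp add: algebra_simps)
  also have "\<dots> \<le> 8 * ?c * n + (8 * ?c + 1) * n"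
    using div_log2_mult_ln_le[OF assms] div_log2_le[OF assms]
    by (intro add_mono mult_left_mono) simp_all
  finally show ?thesis
    by (simp add: algebra_simps)
qed

lemma expected_tests_cost_elem_tests_le:
  assumes "2 \<le> n" "p1 < 1/2" "p2 < 1/2" "0 \<le> q1 x" "q2 x \<le> 1"
    and "q1 x \<le> p1 \<or> 1 - p2 \<le> q2 x"
  shows "expected_tests_cost (elem_tests p1 p2 n q1 q2 x)
       \<le> (prelim_size p1 n + later_tests_size p2 n / n)
         + 2 * later_tests_size p2 n * tests_pass_prob (elem_tests p1 p2 n q1 q2 x)"
proof -
  define a where "a = pmf (majority_test (prelim_size p1 n) (q1 x)) True"
  let ?L = "later_tests p2 n (q2 x)" and ?T = "later_tests_size p2 n"
  have "0 \<le> a" "a \<le> 1"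
    by (simp_all add: a_def pmf_le_1)
  have "0 \<le> ?T" "0 \<le> expected_tests_cost ?L" "expected_tests_cost ?L \<le> ?T"
    by (simp_all add: later_tests_size_nonneg expected_tests_cost_nonneg expected_tests_cost_later_tests_le)
  have "a * expected_tests_cost ?L \<le> ?T / n + 2 * ?T * (a * tests_pass_prob ?L)"
    using assms(6)
  proof
    assume "q1 x \<le> p1"
    then have "a \<le> 1 / n"
      unfolding a_def using assms by (intro prelim_test_pass_le) simp_all
    then have "a * expected_tests_cost ?L \<le> ?T / n"
      using mult_mono[of a "1 / n" "expected_tests_cost ?L" ?T]
        \<open>0 \<le> expected_tests_cost ?L\<close> \<open>expected_tests_cost ?L \<le> ?T\<close>
      by simp
    moreover have "0 \<le> 2 * ?T * (a * tests_pass_prob ?L)"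
      using \<open>0 \<le> ?T\<close> \<open>0 \<le> a\<close> by (simp add: tests_pass_prob_nonneg)
    ultimately show ?thesis
      by linarith
  next
    assume "1 - p2 \<le> q2 x"
    then have "1/2 \<le> tests_pass_prob ?L"
      unfolding later_tests_def using assms by (intro later_tests_pass_prob_ge) simp_all
    then have "a * ?T \<le> 2 * ?T * (a * tests_pass_prob ?L)"
      using mult_left_mono[of "1/2" "tests_pass_prob ?L" "2 * ?T * a"] \<open>0 \<le> ?T\<close> \<open>0 \<le> a\<close>
      by (simp add: algebra_simps)
    moreover have "a * expected_tests_cost ?L \<le> a * ?T"
      using \<open>expected_tests_cost ?L \<le> ?T\<close> \<open>0 \<le> a\<close> by (rule mult_left_mono)
    moreover have "0 \<le> ?T / n"
      using \<open>0 \<le> ?T\<close> by simp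
    ultimately show ?thesis
      by linarith
  qed
  then show ?thesis
    by (simp add: elem_tests_eq a_def algebra_simps)
qed

lemma expected_process_cost_le_linear:
  assumes n: "2 \<le> n" and m: "real (length xs) = real n / log 2 n"
    and "p1 < 1/2" "p2 < 1/2"
    and elems: "\<forall>x\<in>set xs. 0 \<le> q1 x \<and> q2 x \<le> 1 \<and> (q1 x \<le> p1 \<or> 1 - p2 \<le> q2 x)"
  shows "measure_pmf.expectation (process_cost p1 p2 n q1 q2 xs) real
       \<le> (16 * real (cq p1) + 1 + 3 * (32 * real (cq p2) + 8)) * n"
proof -
  let ?P = "real (prelim_size p1 n)" and ?T = "later_tests_size p2 n"
  have "\<forall>x\<in>set xs. expected_tests_cost (elem_tests p1 p2 n q1 q2 x)
          \<le> (?P + ?T / n) + 2 * ?T * tests_pass_prob (elem_tests p1 p2 n q1 q2 x)"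
    using elems n assms(3,4) by (auto intro: expected_tests_cost_elem_tests_le)
  then have "measure_pmf.expectation (process_cost p1 p2 n q1 q2 xs) real
           \<le> length xs * ?P + length xs * (?T / n) + 2 * ?T"
    using later_tests_size_nonneg
    by (subst distrib_left[symmetric]) (intro expected_process_cost_le; simp)
  also have "length xs * (?T / n) \<le> n * (?T / n)"
    using div_log2_le[OF n] later_tests_size_nonneg[of p2 n] by (intro mult_right_mono) (simp_all add: m)
  also have "n * (?T / n) = ?T"
    using n by simp
  finally show ?thesis
    using div_log2_mult_prelim_size_le[OF n, of p1] later_tests_size_le[OF n, of p2]
    by (simp add: m algebra_simps)
qed

theorem lemma17:
  fixes p1 p2 :: real
  assumes "0 \<le> p1" "p1 < 1/2" "0 \<le> p2" "p2 < 1/2"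
  shows "\<exists>C::real. \<forall>(n::nat) (xs::'a::linorder list) (q1::'a \<Rightarrow> real) (q2::'a \<Rightarrow> real).
     2 \<le> n \<and> real (length xs) = real n / log 2 (real n) \<and> distinct xs
     \<and> (\<forall>x\<in>set xs. 0 \<le> q1 x \<and> q1 x \<le> 1 \<and> 0 \<le> q2 x \<and> q2 x \<le> 1)
     \<and> (\<forall>x\<in>lower_part (1/6) (set xs). 1 - p1 \<le> q1 x)
     \<and> (\<forall>x\<in>upper_part (1/3) (set xs). q1 x \<le> p1)
     \<and> (\<forall>x\<in>lower_part (1/3) (set xs). 1 - p2 \<le> q2 x)
     \<and> (\<forall>x\<in>upper_part (3/4) (set xs). q2 x \<le> p2)
     \<longrightarrow> measure_pmf.expectation (process_cost p1 p2 n q1 q2 xs) real \<le> C * real n"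
proof (intro exI allI impI, elim conjE)
  fix n :: nat and xs :: "'a list" and q1 q2 :: "'a \<Rightarrow> real"
  assume "2 \<le> n" "real (length xs) = real n / log 2 (real n)"
    and probs: "\<forall>x\<in>set xs. 0 \<le> q1 x \<and> q1 x \<le> 1 \<and> 0 \<le> q2 x \<and> q2 x \<le> 1"
    and upper: "\<forall>x\<in>upper_part (1/3) (set xs). q1 x \<le> p1"
    and lower: "\<forall>x\<in>lower_part (1/3) (set xs). 1 - p2 \<le> q2 x"
  have "\<forall>x\<in>set xs. 0 \<le> q1 x \<and> q2 x \<le> 1 \<and> (q1 x \<le> p1 \<or> 1 - p2 \<le> q2 x)"
    using probs upper lower unfolding upper_part_def by blast
  then show "measure_pmf.expectation (process_cost p1 p2 n q1 q2 xs) real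
      \<le> (16 * real (cq p1) + 1 + 3 * (32 * real (cq p2) + 8)) * n"
    using \<open>2 \<le> n\<close> \<open>real (length xs) = _\<close> assms by (intro expected_process_cost_le_linear)
qed

end
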